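(* Suppose that $A \in (\mathbb{S}_{\max})^{n \times n}$, let $\gamma$ be a $\mathbb{S}_{\max}$-eigenvalue of $A$ and denote $B=\gamma I \ominus A$. Then \[ A \, B^{\mathrm{adj}} \,\nabla\, \gamma B^{\mathrm{adj}} \enspace. \]
   Context: $\mathbb{S}_{\max}$ is the symmetrized tropical semiring over a divisible totally ordered abelian group, with zero $\mathbf{0}$, unit $\mathbf{1}$, minus $\ominus$; $\mathbb{S}_{\max}^\vee$ is the set of signed elements (positive, negative, or $\mathbf{0}$). The balance relation is $a\,\nabla\, b$ iff $a\ominus b$ is balanced (of the form $c\ominus c$), applied entrywise to matrices. $\det(A)=\bigoplus_\pi\mathrm{sgn}(\pi)\prod_i a_{i\pi(i)}$ with $\mathrm{sgn}(\pi)\in\{\mathbf{1},\ominus\mathbf{1}\}$; $(B^{\mathrm{adj}})_{ij}=(\ominus\mathbf{1})^{i+j}\det B[\hat j,\hat i]$, where $B[\hat j,\hat i]$ is $B$ with row $j$ and column $i$ removed. An $\mathbb{S}_{\max}$-eigenvalue of $A$ is a $\gamma\in\mathbb{S}_{\max}^\vee$ with $\det(\gamma I\ominus A)\,\nabla\,\mathbf{0}$. *)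

theory Defs
  imports "HOL-Combinatorics.Permutations"
begin

text \<open>Symmetrized tropical (max-plus) semiring over a totally ordered abelian group G
(written additively; the tropical product is the group operation, the tropical sum is max).
A nonzero element has a modulus in G and a sign: positive, negative, or balanced.\<close>

datatype ssign = SPos | SNeg | SBal

datatype 'a smax = SZero | SElt 'a ssign

fun ssign_add :: "ssign \<Rightarrow> ssign \<Rightarrow> ssign" where
  "ssign_add SPos SPos = SPos"
| "ssign_add SNeg SNeg = SNeg"
| "ssign_add _ _ = SBal"

fun ssign_mul :: "ssign \<Rightarrow> ssign \<Rightarrow> ssign" where
  "ssign_mul SBal _ = SBal"
| "ssign_mul _ SBal = SBal"
| "ssign_mul SPos t = t"
| "ssign_mul SNeg SPos = SNeg"
| "ssign_mul SNeg SNeg = SPos"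

fun ssign_neg :: "ssign \<Rightarrow> ssign" where
  "ssign_neg SPos = SNeg"
| "ssign_neg SNeg = SPos"
| "ssign_neg SBal = SBal"

lemma ssign_mul_SPos[simp]: "ssign_mul SPos t = t"
  by (cases t; simp)

lemma ssign_add_comm: "ssign_add s t = ssign_add t s"
  by (cases s; cases t; simp)
lemma ssign_add_assoc: "ssign_add (ssign_add s t) u = ssign_add s (ssign_add t u)"
  by (cases s; cases t; cases u; simp)
lemma ssign_mul_comm: "ssign_mul s t = ssign_mul t s"
  by (cases s; cases t; simp)
lemma ssign_mul_assoc: "ssign_mul (ssign_mul s t) u = ssign_mul s (ssign_mul t u)"
  by (cases s; cases t; cases u; simp)
lemma ssign_distrib: "ssign_mul (ssign_add s t) u = ssign_add (ssign_mul s u) (ssign_mul t u)"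
  by (cases s; cases t; cases u; simp)

instantiation smax :: (linordered_ab_group_add) comm_semiring_1
begin

definition zero_smax :: "'a smax" where "zero_smax = SZero"
definition one_smax :: "'a smax" where "one_smax = SElt 0 SPos"

fun plus_smax :: "'a smax \<Rightarrow> 'a smax \<Rightarrow> 'a smax" where
  "plus_smax SZero y = y"
| "plus_smax x SZero = x"
| "plus_smax (SElt a s) (SElt b t) =
     (if a < b then SElt b t else if b < a then SElt a s else SElt a (ssign_add s t))"

fun times_smax :: "'a smax \<Rightarrow> 'a smax \<Rightarrow> 'a smax" where
  "times_smax SZero y = SZero"
| "times_smax x SZero = SZero"
| "times_smax (SElt a s) (SElt b t) = SElt (a + b) (ssign_mul s t)"

instance
proof
  fix x y z :: "'a smax"
  show "x + y + z = x + (y + z)"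
    by (cases x; cases y; cases z; auto simp: ssign_add_assoc)
  show "x + y = y + x"
    by (cases x; cases y; auto simp: ssign_add_comm)
  show "0 + x = x" by (simp add: zero_smax_def)
  show "x * y * z = x * (y * z)"
    by (cases x; cases y; cases z; auto simp: ssign_mul_assoc add.assoc)
  show "x * y = y * x"
    by (cases x; cases y; auto simp: ssign_mul_comm add.commute)
  show "1 * x = x" by (cases x; simp add: one_smax_def)
  show "0 * x = 0" by (simp add: zero_smax_def)
  show "x * 0 = 0" by (cases x; simp add: zero_smax_def)
  show "(x + y) * z = x * z + y * z"
    by (cases x; cases y; cases z; auto simp: ssign_distrib)
  show "(0::'a smax) \<noteq> 1" by (simp add: zero_smax_def one_smax_def)
qed
end

fun sminus :: "'a smax \<Rightarrow> 'a smax" where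
  "sminus SZero = SZero"
| "sminus (SElt a s) = SElt a (ssign_neg s)"

definition sdiff :: "'a::linordered_ab_group_add smax \<Rightarrow> 'a smax \<Rightarrow> 'a smax" where
  "sdiff x y = x + sminus y"

definition sbalanced :: "'a::linordered_ab_group_add smax \<Rightarrow> bool" where
  "sbalanced x \<longleftrightarrow> (\<exists>c. x = sdiff c c)"

definition sbal :: "'a::linordered_ab_group_add smax \<Rightarrow> 'a smax \<Rightarrow> bool" where
  "sbal a b \<longleftrightarrow> sbalanced (sdiff a b)"

definition ssigned :: "'a smax \<Rightarrow> bool" where
  "ssigned x \<longleftrightarrow> x = SZero \<or> (\<exists>a. x = SElt a SPos \<or> x = SElt a SNeg)"

definition divisible_group :: "'a::ab_group_add itself \<Rightarrow> bool" where
  "divisible_group _ \<longleftrightarrow> (\<forall>(x::'a) (k::nat). k > 0 \<longrightarrow> (\<exists>y. (\<Sum>i<k. y) = x))"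

text \<open>n \<times> n matrices are functions nat \<Rightarrow> nat \<Rightarrow> 'a smax, with entries indexed by {..<n}.\<close>
type_synonym 'a smat = "nat \<Rightarrow> nat \<Rightarrow> 'a smax"

definition perm_sgn :: "(nat \<Rightarrow> nat) \<Rightarrow> 'a::linordered_ab_group_add smax" where
  "perm_sgn p = (if evenperm p then 1 else sminus 1)"

definition sdet :: "nat \<Rightarrow> 'a::linordered_ab_group_add smat \<Rightarrow> 'a smax" where
  "sdet n M = (\<Sum>p\<in>{p. p permutes {..<n}}. perm_sgn p * (\<Prod>i<n. M i (p i)))"

text \<open>Matrix with row j and column i removed (size n-1).\<close>
definition sminor :: "'a smat \<Rightarrow> nat \<Rightarrow> nat \<Rightarrow> 'a smat" where
  "sminor M j i = (\<lambda>k l. M (if k < j then k else Suc k) (if l < i then l else Suc l))"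

definition sadj :: "nat \<Rightarrow> 'a::linordered_ab_group_add smat \<Rightarrow> 'a smat" where
  "sadj n B = (\<lambda>i j. sminus 1 ^ (i + j) * sdet (n - 1) (sminor B j i))"

definition smat_mult :: "nat \<Rightarrow> 'a::linordered_ab_group_add smat \<Rightarrow> 'a smat \<Rightarrow> 'a smat" where
  "smat_mult n A B = (\<lambda>i j. \<Sum>k<n. A i k * B k j)"

definition smat_scale :: "'a::linordered_ab_group_add smax \<Rightarrow> 'a smat \<Rightarrow> 'a smat" where
  "smat_scale c M = (\<lambda>i j. c * M i j)"

definition smat_diff :: "'a::linordered_ab_group_add smat \<Rightarrow> 'a smat \<Rightarrow> 'a smat" where
  "smat_diff A B = (\<lambda>i j. sdiff (A i j) (B i j))"

definition smat_id :: "'a::linordered_ab_group_add smat" where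
  "smat_id = (\<lambda>i j. if i = j then 1 else 0)"

definition smat_bal :: "nat \<Rightarrow> 'a::linordered_ab_group_add smat \<Rightarrow> 'a smat \<Rightarrow> bool" where
  "smat_bal n A B \<longleftrightarrow> (\<forall>i<n. \<forall>j<n. sbal (A i j) (B i j))"

definition s_eigenvalue :: "nat \<Rightarrow> 'a::linordered_ab_group_add smat \<Rightarrow> 'a smax \<Rightarrow> bool" where
  "s_eigenvalue n A \<gamma> \<longleftrightarrow> ssigned \<gamma> \<and> sbal (sdet n (smat_diff (smat_scale \<gamma> smat_id) A)) 0"

end

theory Submission
  imports Defs "Jordan_Normal_Form.Determinant"
begin

(* Write B = \<gamma>I \<ominus> A and C = B^adj. By Laplace expansion along row j, the entry (BC)_ij is
   the determinant of B with row j replaced by row i. For i = j this is det B, which is balanced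
   since \<gamma> is an eigenvalue; for i \<noteq> j the matrix has two equal rows, so swapping them shows that
   its determinant equals its own negative, hence is balanced. Since \<ominus> distributes over the
   product, (BC)_ij = \<gamma>C_ij \<ominus> (AC)_ij, and its balancedness is the claim. *)

lemma ssign_neg_neg [simp]: "ssign_neg (ssign_neg s) = s"
  by (cases s) simp_all

lemma ssign_neg_add: "ssign_neg (ssign_add s t) = ssign_add (ssign_neg s) (ssign_neg t)"
  by (cases s; cases t) simp_all

lemma ssign_neg_mul: "ssign_neg (ssign_mul s t) = ssign_mul (ssign_neg s) t"
  by (cases s; cases t) simp_all

lemma sminus_sminus [simp]: "sminus (sminus x) = x"
  by (cases x) simp_all

lemma sminus_zero [simp]: "sminus (0::'a::linordered_ab_group_add smax) = 0"
  by (simp add: zero_smax_def)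

lemma sminus_add: "sminus (x + y) = sminus x + sminus (y::'a::linordered_ab_group_add smax)"
  by (cases x; cases y) (auto simp: ssign_neg_add)

lemma sminus_mult: "sminus (x * y) = sminus x * (y::'a::linordered_ab_group_add smax)"
  by (cases x; cases y) (auto simp: ssign_neg_mul)

lemma sminus_one_mult: "sminus 1 * x = sminus (x::'a::linordered_ab_group_add smax)"
  by (metis sminus_mult mult_1)

lemma sminus_sum: "sminus (sum f S) = (\<Sum>x\<in>S. sminus (f x::'a::linordered_ab_group_add smax))"
  by (induction S rule: infinite_finite_induct) (auto simp: sminus_add)

lemma sminus_one_power:
  "sminus 1 ^ k = (if even k then 1 else sminus (1::'a::linordered_ab_group_add smax))"
  by (induction k) (auto simp: sminus_one_mult)

lemma sdiff_swap: "sdiff y x = sminus (sdiff x (y::'a::linordered_ab_group_add smax))"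
  by (simp add: sdiff_def sminus_add add.commute)

lemma sbalanced_iff: "sbalanced x \<longleftrightarrow> x = 0 \<or> (\<exists>a. x = SElt a SBal)"
proof
  assume "sbalanced x"
  then obtain c where "x = sdiff c c" by (auto simp: sbalanced_def)
  moreover have "ssign_add s (ssign_neg s) = SBal" for s
    by (cases s) simp_all
  ultimately show "x = 0 \<or> (\<exists>a. x = SElt a SBal)"
    by (cases c) (auto simp: sdiff_def zero_smax_def)
next
  have "sdiff 0 0 = (0::'a smax)" "sdiff (SElt a SPos) (SElt a SPos) = SElt a SBal" for a :: 'a
    by (simp_all add: sdiff_def zero_smax_def)
  then show "x = 0 \<or> (\<exists>a. x = SElt a SBal) \<Longrightarrow> sbalanced x"
    unfolding sbalanced_def by metis
qed

lemma sbalanced_sminus: "sbalanced x \<Longrightarrow> sbalanced (sminus x)"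
  unfolding sbalanced_iff by (auto simp: zero_smax_def)

lemma sbalanced_if_eq_sminus: "x = sminus x \<Longrightarrow> sbalanced x"
proof (cases x)
  case (SElt a s)
  then show "x = sminus x \<Longrightarrow> sbalanced x"
    by (cases s) (simp_all add: sbalanced_iff)
qed (simp add: sbalanced_iff zero_smax_def)

lemma sbal_sym: "sbal x y \<longleftrightarrow> sbal y x"
  unfolding sbal_def by (metis sdiff_swap sbalanced_sminus)

lemma perm_sgn_compose_transpose:
  assumes "p permutes {..<n}" "a < n" "b < n" "a \<noteq> b"
  shows "perm_sgn (p \<circ> transpose a b) = sminus (perm_sgn p :: 'a::linordered_ab_group_add smax)"
proof -
  have "evenperm (p \<circ> transpose a b) \<longleftrightarrow> \<not> evenperm p"
    using assms by (simp add: evenperm_comp evenperm_swap permutation_swap_id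
        permutes_imp_permutation[OF finite_lessThan])
  then show ?thesis
    by (simp add: perm_sgn_def)
qed

lemma sdet_swap_rows:
  fixes M :: "'a::linordered_ab_group_add smat"
  assumes ab: "a < n" "b < n" "a \<noteq> b"
  shows "sdet n (M \<circ> transpose a b) = sminus (sdet n M)"
proof -
  let ?\<tau> = "transpose a b"
  have \<tau>: "?\<tau> permutes {..<n}"
    using ab by (intro permutes_swap_id) auto
  have "sdet n (M \<circ> ?\<tau>) =
      (\<Sum>p | p permutes {..<n}. perm_sgn (p \<circ> ?\<tau>) * (\<Prod>l<n. M (?\<tau> l) ((p \<circ> ?\<tau>) l)))"
    unfolding sdet_def by (subst sum_permutations_compose_right[OF \<tau>]) simp
  also have "\<dots> = (\<Sum>p | p permutes {..<n}. sminus (perm_sgn p * (\<Prod>l<n. M l (p l))))"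
    using prod.permute[OF \<tau>, of "\<lambda>l. M l (p l)" for p]
    by (intro sum.cong) (auto simp: perm_sgn_compose_transpose[OF _ ab] sminus_mult)
  finally show ?thesis
    by (simp add: sdet_def sminus_sum)
qed

lemma sdet_identical_rows:
  fixes M :: "'a::linordered_ab_group_add smat"
  assumes "a < n" "b < n" "a \<noteq> b" and "M a = M b"
  shows "sbalanced (sdet n M)"
proof -
  have "M \<circ> transpose a b = M"
    using \<open>M a = M b\<close> by (auto simp: transpose_def)
  then show ?thesis
    using sdet_swap_rows[OF assms(1-3), of M] by (intro sbalanced_if_eq_sminus) simp
qed

lemma perm_sgn_permutation_insert:
  assumes "q permutes {0..<m}" "j < Suc m" "k < Suc m"
  shows "perm_sgn (permutation_insert j k q) =
    sminus 1 ^ (k + j) * (perm_sgn q :: 'a::linordered_ab_group_add smax)"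
proof -
  have "sign (permutation_insert j k q) = (-1) ^ (j + k) * sign q"
    using signof_permutation_insert[OF assms, where 'a=int] by simp
  then have "evenperm (permutation_insert j k q) \<longleftrightarrow> (evenperm q \<longleftrightarrow> even (j + k))"
    by (auto simp: sign_def minus_one_power_iff split: if_splits)
  then show ?thesis
    by (auto simp: perm_sgn_def sminus_one_power sminus_one_mult add.commute)
qed

lemma sadj_eq_sum_permutations:
  fixes B :: "'a::linordered_ab_group_add smat"
  assumes j: "j < Suc m" and k: "k < Suc m"
  shows "sadj (Suc m) B k j =
    (\<Sum>p | p permutes {..<Suc m} \<and> p j = k. perm_sgn p * (\<Prod>l\<in>{..<Suc m} - {j}. B l (p l)))"
proof -
  have rows: "{..<Suc m} - {j} = insert_index j ` {..<m}"
  proof -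
    have "l \<in> insert_index j ` {..<m}" if "l < Suc m" "l \<noteq> j" for l
    proof
      show "l = insert_index j (delete_index j l)"
        using that(2) by (simp add: insert_delete_index)
      show "delete_index j l \<in> {..<m}"
        using that j by (auto simp: delete_index_def)
    qed
    then show ?thesis
      by (auto simp: insert_index_def)
  qed
  have inj: "inj_on (insert_index j) {..<m}"
    by (metis delete_insert_index inj_on_inverseI)
  have minor_term: "(\<Prod>l\<in>{..<Suc m} - {j}. B l (permutation_insert j k q l)) =
      (\<Prod>l<m. sminor B j k l (q l))" for q
  proof -
    have "(\<Prod>l\<in>{..<Suc m} - {j}. B l (permutation_insert j k q l)) =
        (\<Prod>l<m. B (insert_index j l) (permutation_insert j k q (insert_index j l)))"
      unfolding rows by (rule prod.reindex[OF inj, unfolded comp_def])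
    also have "\<dots> = (\<Prod>l<m. sminor B j k l (q l))"
      by (rule prod.cong) (auto simp: permutation_insert_expand insert_index_def sminor_def)
    finally show ?thesis .
  qed
  have "(\<Sum>p | p permutes {..<Suc m} \<and> p j = k. perm_sgn p * (\<Prod>l\<in>{..<Suc m} - {j}. B l (p l)))
      = (\<Sum>q | q permutes {0..<m}. perm_sgn (permutation_insert j k q) *
           (\<Prod>l\<in>{..<Suc m} - {j}. B l (permutation_insert j k q l)))"
    unfolding lessThan_atLeast0 permutation_fix[OF j k]
    by (rule sum.reindex[OF permutation_insert_inj_on[OF j k], unfolded comp_def])
  also have "\<dots> = (\<Sum>q | q permutes {0..<m}.
      sminus 1 ^ (k + j) * (perm_sgn q * (\<Prod>l<m. sminor B j k l (q l))))"
    by (rule sum.cong) (auto simp: perm_sgn_permutation_insert[OF _ j k] minor_term mult.assoc)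
  also have "\<dots> = sminus 1 ^ (k + j) * sdet m (sminor B j k)"
    by (simp add: sdet_def sum_distrib_left lessThan_atLeast0)
  finally show ?thesis
    by (simp add: sadj_def)
qed

lemma sdet_laplace_row:
  fixes B :: "'a::linordered_ab_group_add smat"
  assumes j: "j < n"
  shows "(\<Sum>k<n. r k * sadj n B k j) = sdet n (B(j := r))"
proof -
  obtain m where n: "n = Suc m"
    using j by (cases n) auto
  let ?S = "{p. p permutes {..<n}}"
  let ?term = "\<lambda>p. perm_sgn p * (\<Prod>l<n. (B(j := r)) l (p l))"
  have termeq: "r k * (perm_sgn p * (\<Prod>l\<in>{..<n} - {j}. B l (p l))) = ?term p" if "p j = k" for p k
  proof -
    have "(\<Prod>l<n. (B(j := r)) l (p l)) = r (p j) * (\<Prod>l\<in>{..<n} - {j}. (B(j := r)) l (p l))"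
      using j by (simp add: prod.remove)
    also have "(\<Prod>l\<in>{..<n} - {j}. (B(j := r)) l (p l)) = (\<Prod>l\<in>{..<n} - {j}. B l (p l))"
      by (rule prod.cong) auto
    finally show ?thesis
      using that by (simp add: mult_ac)
  qed
  have "r k * sadj n B k j = (\<Sum>p\<in>{p \<in> ?S. p j = k}. ?term p)" if "k < n" for k
  proof -
    have "r k * sadj n B k j =
        (\<Sum>p\<in>{p \<in> ?S. p j = k}. r k * (perm_sgn p * (\<Prod>l\<in>{..<n} - {j}. B l (p l))))"
      using sadj_eq_sum_permutations[of j m k B] j that by (simp add: n sum_distrib_left)
    also have "\<dots> = (\<Sum>p\<in>{p \<in> ?S. p j = k}. ?term p)"
      by (rule sum.cong[OF refl], rule termeq) simp
    finally show ?thesis .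
  qed
  then have "(\<Sum>k<n. r k * sadj n B k j) = (\<Sum>k<n. \<Sum>p\<in>{p \<in> ?S. p j = k}. ?term p)"
    by simp
  also have "\<dots> = (\<Sum>p\<in>?S. ?term p)"
    using j by (intro sum.group) (auto simp: finite_permutations dest: permutes_in_image)
  finally show ?thesis
    by (simp add: sdet_def)
qed

lemma sbalanced_smat_mult_sadj:
  fixes B :: "'a::linordered_ab_group_add smat"
  assumes "sbalanced (sdet n B)" and i: "i < n" and j: "j < n"
  shows "sbalanced (smat_mult n B (sadj n B) i j)"
proof -
  have "smat_mult n B (sadj n B) i j = sdet n (B(j := B i))"
    using sdet_laplace_row[OF j] by (simp add: smat_mult_def)
  moreover have "sbalanced (sdet n (B(j := B i)))" if "i \<noteq> j"
    using sdet_identical_rows[OF i j that, of "B(j := B i)"] that by simp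
  ultimately show ?thesis
    using assms(1) by (cases "i = j") simp_all
qed

lemma smat_mult_char_matrix:
  fixes A C :: "'a::linordered_ab_group_add smat"
  assumes i: "i < n"
  shows "smat_mult n (smat_diff (smat_scale \<gamma> smat_id) A) C i j =
    sdiff (\<gamma> * C i j) (smat_mult n A C i j)"
proof -
  have "smat_mult n (smat_diff (smat_scale \<gamma> smat_id) A) C i j =
      (\<Sum>k<n. (if i = k then \<gamma> * C k j else 0) + sminus (A i k * C k j))"
    unfolding smat_mult_def smat_diff_def smat_scale_def smat_id_def sdiff_def
    by (intro sum.cong) (auto simp: distrib_right sminus_mult)
  also have "\<dots> = sdiff (\<gamma> * C i j) (smat_mult n A C i j)"
    using i by (simp add: sum.distrib sminus_sum smat_mult_def sdiff_def)
  finally show ?thesis .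
qed

theorem proposition3p35:
  fixes A :: "'a::linordered_ab_group_add smat" and n :: nat and \<gamma> :: "'a smax"
  assumes "divisible_group TYPE('a)"
    and "s_eigenvalue n A \<gamma>"
  shows "let B = smat_diff (smat_scale \<gamma> smat_id) A in
         smat_bal n (smat_mult n A (sadj n B)) (smat_scale \<gamma> (sadj n B))"
proof -
  define B where "B = smat_diff (smat_scale \<gamma> smat_id) A"
  have det: "sbalanced (sdet n B)"
    using assms(2) by (simp add: s_eigenvalue_def sbal_def B_def sdiff_def)
  have "sbal (\<gamma> * sadj n B i j) (smat_mult n A (sadj n B) i j)" if "i < n" "j < n" for i j
    using sbalanced_smat_mult_sadj[OF det that]
    unfolding sbal_def B_def smat_mult_char_matrix[OF that(1)] .
  then show ?thesis
    by (simp add: Let_def smat_bal_def smat_scale_def sbal_sym B_def)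
qed

end
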